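(* Let $\mathcal{F}$ be a family of finite subsets of $\mathbb{N}$ with $\bigcup\mathcal{F}=\mathbb{N}$, and assume $\mathcal{F}$ is convergence enforcing. Then there is a finite constant $C=C(\mathcal{F})$ such that for every sequence $(a_i)_{i\in\mathbb{N}}$ of nonnegative reals: if $\sum_{i\in A}a_i\le1$ for all $A\in\mathcal{F}$, then $\sum_{i\in\mathbb{N}}a_i\le C$.
   Context: A family $\mathcal{F}$ of finite subsets of $\mathbb{N}=\{1,2,\ldots\}$ is convergence enforcing if for every sequence $(a_i)_{i\in\mathbb{N}}$ of nonnegative reals: if $\sum_{i\in A}a_i\le1$ for all $A\in\mathcal{F}$, then $\sum_{i\in\mathbb{N}}a_i<\infty$. *)

theory Defs
  imports "HOL-Analysis.Analysis"
begin

text \<open>The paper's N = {1,2,...} is rendered as the set {1..} of type nat.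
  A sequence (a_i) indexed by N is a function nat => real, only its values on {1..} matter.\<close>

definition convergence_enforcing :: "nat set set \<Rightarrow> bool" where
  "convergence_enforcing F \<longleftrightarrow>
     (\<forall>a :: nat \<Rightarrow> real. (\<forall>i\<in>{1..}. 0 \<le> a i) \<longrightarrow> (\<forall>A\<in>F. sum a A \<le> 1)
        \<longrightarrow> a summable_on {1..})"

end

theory Submission
  imports Defs
begin

text \<open>Otherwise there are admissible sequences \<open>a\<^sub>k\<close> of total mass greater than
  \<open>k 2\<^sup>k\<^sup>+\<^sup>1\<close>. Since every index lies in some \<open>A \<in> F\<close>, admissibility forces all entries
  into \<open>[0,1]\<close>, so the mixture \<open>b = \<Sum>\<^sub>k 2\<^sup>-\<^sup>k\<^sup>-\<^sup>1 a\<^sub>k\<close> converges pointwise and is again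
  admissible. By convergence enforcement \<open>b\<close> is summable, yet its mass exceeds \<open>2\<^sup>-\<^sup>k\<^sup>-\<^sup>1\<close>
  times the mass of \<open>a\<^sub>k\<close>, i.e. exceeds every \<open>k\<close>.\<close>

definition admissible :: "'a set \<Rightarrow> 'a set set \<Rightarrow> ('a \<Rightarrow> real) \<Rightarrow> bool" where
  "admissible S F a \<longleftrightarrow> (\<forall>i\<in>S. 0 \<le> a i) \<and> (\<forall>A\<in>F. sum a A \<le> 1)"

lemma member_le_one_if_sum_le_one:
  fixes a :: "'a \<Rightarrow> real"
  assumes "finite A" "i \<in> A" "\<And>j. j \<in> A \<Longrightarrow> 0 \<le> a j" "sum a A \<le> 1"
  shows "a i \<le> 1"
  by (rule order_trans[OF member_le_sum assms(4)]) (use assms in auto)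

lemma summable_weighted_unit_interval:
  fixes w x :: "nat \<Rightarrow> real"
  assumes "summable w" "\<And>k. 0 \<le> w k" "\<And>k. 0 \<le> x k" "\<And>k. x k \<le> 1"
  shows "summable (\<lambda>k. w k * x k)"
  by (rule summable_comparison_test'[OF assms(1)]) (use assms in \<open>simp add: abs_mult mult_left_le\<close>)

lemma sum_suminf_mixture_le:
  fixes w :: "nat \<Rightarrow> real" and a :: "nat \<Rightarrow> 'a \<Rightarrow> real"
  assumes "finite A" "summable w" "\<And>k. 0 \<le> w k"
    and "\<And>k i. i \<in> A \<Longrightarrow> 0 \<le> a k i" "\<And>k. sum (a k) A \<le> 1"
  shows "(\<Sum>i\<in>A. \<Sum>k. w k * a k i) \<le> (\<Sum>k. w k)"
proof -
  have "summable (\<lambda>k. w k * a k i)" if "i \<in> A" for i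
  proof (rule summable_weighted_unit_interval[OF assms(2,3) assms(4)[OF that]])
    show "a k i \<le> 1" for k
      by (rule member_le_one_if_sum_le_one[OF assms(1) that]) (use assms in auto)
  qed
  then have "(\<Sum>i\<in>A. \<Sum>k. w k * a k i) = (\<Sum>k. w k * sum (a k) A)"
    by (simp add: suminf_sum sum_distrib_left)
  also have "\<dots> \<le> (\<Sum>k. w k)"
  proof (rule suminf_le)
    show "w k * sum (a k) A \<le> w k" for k
      using assms(3,5) by (simp add: mult_left_le)
    show "summable (\<lambda>k. w k * sum (a k) A)"
      using assms(4,5) by (intro summable_weighted_unit_interval[OF assms(2,3)] sum_nonneg)
  qed (fact assms(2))
  finally show ?thesis .
qed

lemma infsum_mixture_ge:
  fixes w :: "nat \<Rightarrow> real" and a :: "nat \<Rightarrow> 'a \<Rightarrow> real"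
  assumes "(\<lambda>i. \<Sum>k. w k * a k i) summable_on S" "a n summable_on S" "\<And>k. 0 \<le> w k"
    and "\<And>k i. i \<in> S \<Longrightarrow> 0 \<le> a k i" "\<And>i. i \<in> S \<Longrightarrow> summable (\<lambda>k. w k * a k i)"
  shows "w n * infsum (a n) S \<le> infsum (\<lambda>i. \<Sum>k. w k * a k i) S"
proof -
  have "w n * infsum (a n) S = infsum (\<lambda>i. w n * a n i) S"
    by (simp add: infsum_cmult_right assms(2))
  also have "\<dots> \<le> infsum (\<lambda>i. \<Sum>k. w k * a k i) S"
  proof (rule infsum_mono)
    show "w n * a n i \<le> (\<Sum>k. w k * a k i)" if "i \<in> S" for i
      using sum_le_suminf[OF assms(5)[OF that], of "{n}"] assms(3,4) that by simp
  qed (use assms(1,2) summable_on_cmult_right in auto)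
  finally show ?thesis .
qed

lemma admissible_le_one:
  assumes "admissible S F a" "\<forall>A\<in>F. finite A \<and> A \<subseteq> S" "i \<in> \<Union>F"
  shows "a i \<le> 1"
proof -
  obtain A where A: "A \<in> F" "i \<in> A"
    using assms(3) by blast
  with assms(2) have "finite A" "A \<subseteq> S"
    by auto
  show ?thesis
    by (rule member_le_one_if_sum_le_one[OF \<open>finite A\<close> A(2)])
      (use assms(1) A \<open>A \<subseteq> S\<close> in \<open>auto simp: admissible_def\<close>)
qed

lemma summable_mixture:
  assumes "\<And>k. admissible S F (a k)" "\<forall>A\<in>F. finite A \<and> A \<subseteq> S" "\<Union>F = S"
    and "summable w" "\<And>k. 0 \<le> w k" "i \<in> S"
  shows "summable (\<lambda>k. w k * a k i)"
proof (rule summable_weighted_unit_interval[OF assms(4,5)])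
  show "0 \<le> a k i" for k
    using assms(1,6) unfolding admissible_def by blast
  show "a k i \<le> 1" for k
    by (rule admissible_le_one[OF assms(1,2)]) (use assms(3,6) in auto)
qed

lemma admissible_mixture:
  assumes "\<And>k. admissible S F (a k)" "\<forall>A\<in>F. finite A \<and> A \<subseteq> S" "\<Union>F = S"
    and "summable w" "\<And>k. 0 \<le> w k" "suminf w \<le> 1"
  shows "admissible S F (\<lambda>i. \<Sum>k. w k * a k i)"
  unfolding admissible_def
proof
  show "\<forall>i\<in>S. 0 \<le> (\<Sum>k. w k * a k i)"
    using assms(1,5) summable_mixture[OF assms(1-5)] unfolding admissible_def
    by (auto intro!: suminf_nonneg)
  show "\<forall>A\<in>F. (\<Sum>i\<in>A. \<Sum>k. w k * a k i) \<le> 1"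
  proof
    fix A assume "A \<in> F"
    with assms(2) have "finite A" "A \<subseteq> S"
      by auto
    with assms(1) \<open>A \<in> F\<close> have "(\<Sum>i\<in>A. \<Sum>k. w k * a k i) \<le> suminf w"
      unfolding admissible_def by (intro sum_suminf_mixture_le[OF _ assms(4,5)]) auto
    with assms(6) show "(\<Sum>i\<in>A. \<Sum>k. w k * a k i) \<le> 1"
      by linarith
  qed
qed

lemma convergence_enforcing_summable:
  "convergence_enforcing F \<Longrightarrow> admissible {1..} F a \<Longrightarrow> a summable_on {1..}"
  unfolding convergence_enforcing_def admissible_def by blast

lemma admissible_infsum_bounded:
  assumes "\<forall>A\<in>F. finite A \<and> A \<subseteq> {1..}" "\<Union>F = {1..}" "convergence_enforcing F"
  shows "\<exists>C. \<forall>a. admissible {1..} F a \<longrightarrow> infsum a {1..} \<le> C"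
proof (rule ccontr)
  note admissible_summable = convergence_enforcing_summable[OF assms(3)]
  assume "\<not> ?thesis"
  then have "\<exists>a. admissible {1..} F a \<and> 2 ^ Suc k * real k < infsum a {1..}" for k
    by (meson not_le)
  then obtain a :: "nat \<Rightarrow> nat \<Rightarrow> real" where a: "\<And>k. admissible {1..} F (a k)"
    and a_large: "\<And>k. 2 ^ Suc k * real k < infsum (a k) {1..}"
    by metis
  define w :: "nat \<Rightarrow> real" where "w = (\<lambda>k. (1/2) ^ Suc k)"
  have "w sums 1"
    unfolding w_def by (rule power_half_series)
  then have w: "summable w" "suminf w = 1" "\<And>k. 0 \<le> w k"
    by (auto simp: sums_iff w_def simp del: power_Suc)
  have b: "admissible {1..} F (\<lambda>i. \<Sum>k. w k * a k i)"
    using admissible_mixture[OF a assms(1,2) w(1,3)] w(2) by simp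
  have "real k < infsum (\<lambda>i. \<Sum>k. w k * a k i) {1..}" for k
  proof -
    have "real k = w k * (2 ^ Suc k * real k)"
      by (simp add: w_def power_one_over)
    also have "\<dots> < w k * infsum (a k) {1..}"
      by (intro mult_strict_left_mono a_large) (simp add: w_def)
    also have "\<dots> \<le> infsum (\<lambda>i. \<Sum>k. w k * a k i) {1..}"
      using a b admissible_summable summable_mixture[OF a assms(1,2) w(1,3)] w(3)
      by (intro infsum_mixture_ge) (auto simp: admissible_def)
    finally show ?thesis .
  qed
  then show False
    using reals_Archimedean2 not_less_iff_gr_or_eq by blast
qed

theorem proposition4p2:
  fixes F :: "nat set set"
  assumes "\<forall>A\<in>F. finite A \<and> A \<subseteq> {1..}"
    and "\<Union>F = {1..}"
    and "convergence_enforcing F"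
  shows "\<exists>C :: real. \<forall>a :: nat \<Rightarrow> real. (\<forall>i\<in>{1..}. 0 \<le> a i) \<longrightarrow> (\<forall>A\<in>F. sum a A \<le> 1)
           \<longrightarrow> a summable_on {1..} \<and> infsum a {1..} \<le> C"
proof -
  obtain C where "\<And>a. admissible {1..} F a \<Longrightarrow> infsum a {1..} \<le> C"
    using admissible_infsum_bounded[OF assms] by blast
  with convergence_enforcing_summable[OF assms(3)] show ?thesis
    unfolding admissible_def by blast
qed

end
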